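(* Let $E$ be a Banach space over $\mathbb{K}$, $m,k\in\mathbb{N}$ with $k>1$, and suppose that there exists a surjective polynomial $R\in\mathcal{P}(^{mk}E;\ell_1)$. Then there exists a weak*-weak*-continuous operator $T\in\mathcal{L}(\mathcal{P}(^k\ell_1);\mathcal{P}(^{mk}E))$ such that $T\neq\Delta^1_kP$ for every $P\in\mathcal{P}(^mE;\ell_1)$.
   Context: Banach spaces are over $\mathbb{K}=\mathbb{R}$ or $\mathbb{C}$. $\mathcal{P}(^jX;Y)$ is the space of continuous $j$-homogeneous polynomials $X\to Y$, $\mathcal{P}(^jX)=\mathcal{P}(^jX;\mathbb{K})$, $\mathcal{L}(X;Y)$ the bounded linear operators. For $P\in\mathcal{P}(^mE;F)$, $\Delta^1_kP\colon\mathcal{P}(^kF)\to\mathcal{P}(^{mk}E)$ is $\Delta^1_kP(q)=q\circ P$. For a Banach space $X$ and $j\in\mathbb{N}$, $\widehat{\otimes}^{j,s}_\pi X$ is the completed $j$-fold symmetric projective tensor product, and for $q\in\mathcal{P}(^jX)$, $q_L\in(\widehat{\otimes}^{j,s}_\pi X)^*$ is the linearization with $q_L(x\otimes\cdots\otimes x)=q(x)$; $q\mapsto q_L$ is a topological isomorphism $\mathcal{P}(^jX)\to(\widehat{\otimes}^{j,s}_\pi X)^*$. The weak* topology on $\mathcal{P}(^jX)$ is the one induced via this isomorphism by the weak* topology of $(\widehat{\otimes}^{j,s}_\pi X)^*$. *)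

theory Defs
  imports "HOL-Analysis.Analysis"
begin

text \<open>This lets us treat
E (a type), the scalar field K and the sequence space l1 uniformly.\<close>

record ('k, 'a) nspace =
  carr :: "'a set"
  add  :: "'a \<Rightarrow> 'a \<Rightarrow> 'a"
  smul :: "'k \<Rightarrow> 'a \<Rightarrow> 'a"
  nrm  :: "'a \<Rightarrow> real"

text \<open>A K-vector space structure (K = 'k) on a real Banach space 'e, compatible with
its real structure and its norm.  With 'k :: {real_normed_field, banach}
(i.e. K = R or K = C), 'e :: banach together with such sc is a Banach space over K.\<close>

definition kvs :: "('k::real_normed_field \<Rightarrow> 'e::real_normed_vector \<Rightarrow> 'e) \<Rightarrow> bool" where
  "kvs sc \<longleftrightarrow>
     (\<forall>a b x. sc a (sc b x) = sc (a * b) x) \<and>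
     (\<forall>x. sc 1 x = x) \<and>
     (\<forall>a x y. sc a (x + y) = sc a x + sc a y) \<and>
     (\<forall>a b x. sc (a + b) x = sc a x + sc b x) \<and>
     (\<forall>r x. sc (of_real r) x = r *\<^sub>R x) \<and>
     (\<forall>a x. norm (sc a x) = norm a * norm x)"

definition Esp :: "('k \<Rightarrow> 'e \<Rightarrow> 'e) \<Rightarrow> ('k, 'e::real_normed_vector) nspace" where
  "Esp sc = \<lparr>carr = UNIV, add = (+), smul = sc, nrm = norm\<rparr>"

definition Ksp :: "('k::real_normed_field, 'k) nspace" where
  "Ksp = \<lparr>carr = UNIV, add = (+), smul = (*), nrm = norm\<rparr>"

definition L1 :: "('k::real_normed_field, nat \<Rightarrow> 'k) nspace" where
  "L1 = \<lparr>carr = {x. summable (\<lambda>n. norm (x n))},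
         add = (\<lambda>x y n. x n + y n),
         smul = (\<lambda>a x n. a * x n),
         nrm = (\<lambda>x. \<Sum>n. norm (x n))\<rparr>"

text \<open>Continuous (= bounded) j-linear maps X^j \<rightarrow> Y; arguments are indexed by i < j.\<close>

definition mlin :: "('k::real_normed_field, 'a) nspace \<Rightarrow> ('k, 'b) nspace \<Rightarrow> nat
                    \<Rightarrow> ((nat \<Rightarrow> 'a) \<Rightarrow> 'b) \<Rightarrow> bool" where
  "mlin X Y j A \<longleftrightarrow>
     (\<forall>xs ys. (\<forall>i<j. xs i = ys i) \<longrightarrow> A xs = A ys) \<and>
     (\<forall>xs. (\<forall>i<j. xs i \<in> carr X) \<longrightarrow> A xs \<in> carr Y) \<and>
     (\<forall>xs i u v a b. (\<forall>l<j. xs l \<in> carr X) \<and> i < j \<and> u \<in> carr X \<and> v \<in> carr X \<longrightarrow>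
        A (xs(i := add X (smul X a u) (smul X b v))) =
        add Y (smul Y a (A (xs(i := u)))) (smul Y b (A (xs(i := v))))) \<and>
     (\<exists>C. \<forall>xs. (\<forall>i<j. xs i \<in> carr X) \<longrightarrow> nrm Y (A xs) \<le> C * (\<Prod>i<j. nrm X (xs i)))"

definition hpoly :: "('k::real_normed_field, 'a) nspace \<Rightarrow> ('k, 'b) nspace \<Rightarrow> nat
                     \<Rightarrow> ('a \<Rightarrow> 'b) \<Rightarrow> bool" where
  "hpoly X Y j P \<longleftrightarrow> (\<exists>A. mlin X Y j A \<and> (\<forall>x\<in>carr X. P x = A (\<lambda>_. x)))"

text \<open>The space P(^j X) of scalar valued continuous j-homogeneous polynomials
(extended by 0 outside the carrier, so each polynomial has a unique representative).\<close>

definition spoly :: "('k::real_normed_field, 'a) nspace \<Rightarrow> nat \<Rightarrow> ('a \<Rightarrow> 'k) set" where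
  "spoly X j = {q. hpoly X Ksp j q \<and> (\<forall>x. x \<notin> carr X \<longrightarrow> q x = 0)}"

definition pnorm :: "('k::real_normed_field, 'a) nspace \<Rightarrow> ('a \<Rightarrow> 'k) \<Rightarrow> real" where
  "pnorm X q = Sup ((\<lambda>x. norm (q x)) ` {x \<in> carr X. nrm X x \<le> 1})"

text \<open>Elements of the completed symmetric projective tensor product are exactly the
series  u = \<Sum>n. lam n * x_n \<otimes> ... \<otimes> x_n  with \<Sum>n |lam n| \<parallel>x_n\<parallel>^j < \<infinity>;
for such u, q_L(u) = \<Sum>n. lam n * q(x_n).\<close>

definition adm :: "('k::real_normed_field, 'a) nspace \<Rightarrow> nat \<Rightarrow> (nat \<Rightarrow> 'k) \<times> (nat \<Rightarrow> 'a) \<Rightarrow> bool" where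
  "adm X j u \<longleftrightarrow> (\<forall>n. snd u n \<in> carr X) \<and>
                  summable (\<lambda>n. norm (fst u n) * nrm X (snd u n) ^ j)"

definition tens_eval :: "(nat \<Rightarrow> 'k::real_normed_field) \<times> (nat \<Rightarrow> 'a) \<Rightarrow> ('a \<Rightarrow> 'k) \<Rightarrow> 'k" where
  "tens_eval u q = (\<Sum>n. fst u n * q (snd u n))"

definition wstar :: "('k::{real_normed_field}, 'a) nspace \<Rightarrow> nat \<Rightarrow> ('a \<Rightarrow> 'k) topology" where
  "wstar X j = pullback_topology (spoly X j)
       (\<lambda>q. restrict (\<lambda>u. tens_eval u q) {u. adm X j u})
       (product_topology (\<lambda>_. euclidean) {u. adm X j u})"

definition blin_poly :: "('k::real_normed_field, 'a) nspace \<Rightarrow> nat \<Rightarrow> ('k, 'b) nspace \<Rightarrow> nat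
                         \<Rightarrow> (('a \<Rightarrow> 'k) \<Rightarrow> ('b \<Rightarrow> 'k)) \<Rightarrow> bool" where
  "blin_poly X i Y j T \<longleftrightarrow>
     (\<forall>q\<in>spoly X i. T q \<in> spoly Y j) \<and>
     (\<forall>q\<in>spoly X i. \<forall>q'\<in>spoly X i. \<forall>a b.
        T (\<lambda>x. a * q x + b * q' x) = (\<lambda>y. a * T q y + b * T q' y)) \<and>
     (\<exists>C. \<forall>q\<in>spoly X i. pnorm Y (T q) \<le> C * pnorm X q)"

definition Delta1 :: "('e \<Rightarrow> 'b) \<Rightarrow> ('b \<Rightarrow> 'k) \<Rightarrow> ('e \<Rightarrow> 'k)" where
  "Delta1 P q = q \<circ> P"

end

theory Submission
  imports Defs
begin

text \<open>Let \<open>e\<^sub>0, e\<^sub>1\<close> be the first two unit vectors of \<open>\<ell>\<^sub>1\<close> and \<open>R\<^sub>0, R\<^sub>1\<close> the first two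
coordinates of \<open>R\<close>. The operator \<open>T q = q(e\<^sub>0) R\<^sub>0 + q(e\<^sub>1) R\<^sub>1\<close> is bounded and weak*-weak*
continuous, since it only involves point evaluations of \<open>q\<close>. If \<open>T = \<Delta>\<^sup>1\<^sub>k P\<close>, choose \<open>x\<close> with
\<open>R x = e\<^sub>0 + e\<^sub>1\<close>; then \<open>q(P x) = q(e\<^sub>0) + q(e\<^sub>1)\<close> for all \<open>q \<in> \<P>(\<^sup>k\<ell>\<^sub>1)\<close>. Testing with the
monomials \<open>y\<^sub>0\<^sup>k\<close>, \<open>y\<^sub>1\<^sup>k\<close> and \<open>y\<^sub>1 y\<^sub>0\<^sup>k\<^sup>-\<^sup>1\<close> shows that the first two coordinates of \<open>P x\<close> are
nonzero while their mixed monomial vanishes, which is impossible for \<open>k > 1\<close>.\<close>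

lemma L1_coord_le:
  fixes x :: "nat \<Rightarrow> 'k::real_normed_field"
  assumes "x \<in> carr L1"
  shows "norm (x n) \<le> nrm L1 x"
proof -
  have "summable (\<lambda>n. norm (x n))" using assms by (simp add: L1_def)
  then have "(\<Sum>n\<in>{n}. norm (x n)) \<le> (\<Sum>n. norm (x n))"
    by (rule sum_le_suminf) auto
  then show ?thesis by (simp add: L1_def)
qed

lemma L1_nrm_nonneg:
  fixes x :: "nat \<Rightarrow> 'k::real_normed_field"
  assumes "x \<in> carr L1"
  shows "0 \<le> nrm L1 x"
  using assms by (simp add: L1_def suminf_nonneg)

definition l1_unit :: "nat \<Rightarrow> nat \<Rightarrow> 'k::real_normed_field" where
  "l1_unit n = (\<lambda>i. if i = n then 1 else 0)"

lemma norm_l1_unit_sums: "(\<lambda>i. norm (l1_unit n i :: 'k::real_normed_field)) sums 1"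
proof -
  have "(\<lambda>i. norm (l1_unit n i :: 'k)) = (\<lambda>i. if i = n then 1 else 0)"
    by (auto simp: l1_unit_def)
  then show ?thesis using sums_single[of n "\<lambda>_. 1 :: real"] by simp
qed

lemma l1_unit_in_carr: "l1_unit n \<in> carr (L1 :: ('k::real_normed_field, nat \<Rightarrow> 'k) nspace)"
  using sums_summable[OF norm_l1_unit_sums] by (simp add: L1_def)

lemma nrm_l1_unit: "nrm (L1 :: ('k::real_normed_field, nat \<Rightarrow> 'k) nspace) (l1_unit n) = 1"
  using norm_l1_unit_sums by (auto simp: L1_def sums_iff)

definition l1_monomial :: "nat \<Rightarrow> (nat \<Rightarrow> nat) \<Rightarrow> (nat \<Rightarrow> 'k::real_normed_field) \<Rightarrow> 'k" where
  "l1_monomial k c y = (if summable (\<lambda>n. norm (y n)) then (\<Prod>i<k. y (c i)) else 0)"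

lemma l1_monomial_apply: "x \<in> carr L1 \<Longrightarrow> l1_monomial k c x = (\<Prod>i<k. x (c i))"
  by (simp add: l1_monomial_def L1_def)

lemma l1_monomial_l1_unit:
  "l1_monomial k c (l1_unit n :: nat \<Rightarrow> 'k::real_normed_field) = (if \<forall>i<k. c i = n then 1 else 0)"
proof (cases "\<forall>i<k. c i = n")
  case True
  then show ?thesis unfolding l1_monomial_apply[OF l1_unit_in_carr] by (simp add: l1_unit_def)
next
  case False
  then obtain i where "i < k" "c i \<noteq> n" by blast
  then have vanish: "(\<Prod>i<k. l1_unit n (c i) :: 'k) = 0"
    by (intro prod_zero bexI[of _ i]) (auto simp: l1_unit_def)
  show ?thesis
    by (simp only: l1_monomial_apply[OF l1_unit_in_carr] vanish False if_False)
qed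

lemma l1_monomial_in_spoly: "l1_monomial k c \<in> spoly (L1 :: ('k::real_normed_field, nat \<Rightarrow> 'k) nspace) k"
proof -
  define A where "A = (\<lambda>xs::nat \<Rightarrow> nat \<Rightarrow> 'k. \<Prod>l<k. xs l (c l))"
  have "mlin (L1 :: ('k, nat \<Rightarrow> 'k) nspace) Ksp k A"
    unfolding mlin_def
  proof (intro conjI allI impI)
    fix xs ys :: "nat \<Rightarrow> nat \<Rightarrow> 'k" assume "\<forall>i<k. xs i = ys i"
    then show "A xs = A ys" unfolding A_def by (intro prod.cong) auto
  next
    fix xs :: "nat \<Rightarrow> nat \<Rightarrow> 'k" show "A xs \<in> carr Ksp" by (simp add: Ksp_def)
  next
    fix xs :: "nat \<Rightarrow> nat \<Rightarrow> 'k" and i and u v :: "nat \<Rightarrow> 'k" and a b :: 'k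
    assume "(\<forall>l<k. xs l \<in> carr L1) \<and> i < k \<and> u \<in> carr L1 \<and> v \<in> carr L1"
    then have "i \<in> {..<k}" by simp
    define Q where "Q = (\<Prod>l\<in>{..<k}-{i}. xs l (c l))"
    have factor: "A (xs(i := w)) = w (c i) * Q" for w
      unfolding A_def Q_def prod.remove[OF finite_lessThan \<open>i \<in> {..<k}\<close>]
      by (auto intro!: prod.cong)
    show "A (xs(i := add L1 (smul L1 a u) (smul L1 b v))) =
        add Ksp (smul Ksp a (A (xs(i := u)))) (smul Ksp b (A (xs(i := v))))"
      unfolding factor by (simp add: L1_def Ksp_def algebra_simps)
  next
    show "\<exists>C. \<forall>xs. (\<forall>i<k. xs i \<in> carr L1) \<longrightarrow> nrm Ksp (A xs) \<le> C * (\<Prod>i<k. nrm L1 (xs i))"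
    proof (intro exI[of _ 1] allI impI)
      fix xs :: "nat \<Rightarrow> nat \<Rightarrow> 'k" assume "\<forall>i<k. xs i \<in> carr L1"
      then have "(\<Prod>l<k. norm (xs l (c l))) \<le> (\<Prod>i<k. nrm L1 (xs i))"
        by (intro prod_mono) (auto intro: L1_coord_le)
      then show "nrm Ksp (A xs) \<le> 1 * (\<Prod>i<k. nrm L1 (xs i))"
        by (simp add: Ksp_def A_def prod_norm)
    qed
  qed
  then show ?thesis
    unfolding spoly_def hpoly_def by (auto simp: l1_monomial_def A_def L1_def)
qed

lemma point_eval_ne_sum_of_unit_evals:
  fixes p :: "nat \<Rightarrow> 'k::real_normed_field"
  assumes "k > 1" and "p \<in> carr L1"
  shows "\<exists>q\<in>spoly L1 k. q p \<noteq> q (l1_unit 0) + q (l1_unit 1)"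
proof (rule ccontr)
  assume contra: "\<not> ?thesis"
  have eval: "(\<Prod>i<k. p (c i)) =
      (if \<forall>i<k. c i = 0 then 1 else 0) + (if \<forall>i<k. c i = 1 then 1 else 0)" for c
  proof -
    have "(\<Prod>i<k. p (c i)) = l1_monomial k c p"
      by (simp add: l1_monomial_apply[OF \<open>p \<in> carr L1\<close>])
    also have "\<dots> = l1_monomial k c (l1_unit 0) + l1_monomial k c (l1_unit 1)"
      using contra l1_monomial_in_spoly[of k c] by blast
    finally show ?thesis by (simp only: l1_monomial_l1_unit)
  qed
  have "p 0 ^ k = 1" "p 1 ^ k = 1"
    using eval[of "\<lambda>_. 0"] eval[of "\<lambda>_. 1"] \<open>k > 1\<close> by auto
  then have "p 0 \<noteq> 0" "p 1 \<noteq> 0"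
    using \<open>k > 1\<close> by (auto simp: power_0_left)
  define c where "c = (\<lambda>i::nat. if i = 0 then 1 else (0::nat))"
  have not_const: "\<not> (\<forall>i<k. c i = 0)" "\<not> (\<forall>i<k. c i = 1)"
    using \<open>k > 1\<close> by (auto simp: c_def dest: spec[of _ 0] spec[of _ 1])
  have "(\<Prod>i<k. p (c i)) = 0"
    using eval[of c] by (simp only: not_const if_False add_0)
  then obtain i where "p (c i) = 0" by auto
  with \<open>p 0 \<noteq> 0\<close> \<open>p 1 \<noteq> 0\<close> show False by (auto simp: c_def split: if_splits)
qed

lemma spoly_norm_le_pnorm:
  assumes "q \<in> spoly X k" and nonneg: "\<forall>y\<in>carr X. 0 \<le> nrm X y"
    and "x \<in> carr X" "nrm X x \<le> 1"
  shows "norm (q x) \<le> pnorm X q"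
proof -
  obtain A where A: "mlin X Ksp k A" "\<forall>x\<in>carr X. q x = A (\<lambda>_. x)"
    using assms(1) by (auto simp: spoly_def hpoly_def)
  obtain C where C: "\<forall>xs. (\<forall>i<k. xs i \<in> carr X) \<longrightarrow> nrm Ksp (A xs) \<le> C * (\<Prod>i<k. nrm X (xs i))"
    using A(1) unfolding mlin_def by blast
  have "norm (q y) \<le> max C 0" if "y \<in> carr X" "nrm X y \<le> 1" for y
  proof -
    have "norm (q y) \<le> C * nrm X y ^ k"
      using C[rule_format, of "\<lambda>_. y"] A(2) that by (simp add: Ksp_def)
    also have "\<dots> \<le> max C 0 * 1"
      using nonneg that by (intro mult_mono power_le_one) auto
    finally show ?thesis by simp
  qed
  then have "bdd_above ((\<lambda>y. norm (q y)) ` {y \<in> carr X. nrm X y \<le> 1})"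
    by (auto simp: bdd_above_def)
  then show ?thesis
    unfolding pnorm_def using assms(3,4) by (intro cSup_upper) auto
qed

lemma mlin_L1_coord_comb:
  fixes A :: "(nat \<Rightarrow> 'a) \<Rightarrow> nat \<Rightarrow> 'k::real_normed_field"
  assumes "mlin X L1 j A"
  shows "mlin X Ksp j (\<lambda>xs. c0 * A xs n0 + c1 * A xs n1)"
  unfolding mlin_def
proof (intro conjI allI impI)
  note A = assms[unfolded mlin_def]
  fix xs ys :: "nat \<Rightarrow> 'a" assume "\<forall>i<j. xs i = ys i"
  then show "c0 * A xs n0 + c1 * A xs n1 = c0 * A ys n0 + c1 * A ys n1" using A by metis
next
  fix xs :: "nat \<Rightarrow> 'a" show "c0 * A xs n0 + c1 * A xs n1 \<in> carr Ksp" by (simp add: Ksp_def)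
next
  note A = assms[unfolded mlin_def]
  fix xs :: "nat \<Rightarrow> 'a" and i u v and a b :: 'k
  assume "(\<forall>l<j. xs l \<in> carr X) \<and> i < j \<and> u \<in> carr X \<and> v \<in> carr X"
  then have lin: "A (xs(i := add X (smul X a u) (smul X b v))) =
        (\<lambda>n. a * A (xs(i := u)) n + b * A (xs(i := v)) n)"
    using A by (simp add: L1_def)
  show "c0 * A (xs(i := add X (smul X a u) (smul X b v))) n0
          + c1 * A (xs(i := add X (smul X a u) (smul X b v))) n1 =
        add Ksp (smul Ksp a (c0 * A (xs(i := u)) n0 + c1 * A (xs(i := u)) n1))
          (smul Ksp b (c0 * A (xs(i := v)) n0 + c1 * A (xs(i := v)) n1))"
    unfolding lin by (simp add: Ksp_def algebra_simps)
next
  obtain C where C: "\<forall>xs. (\<forall>i<j. xs i \<in> carr X) \<longrightarrow> nrm L1 (A xs) \<le> C * (\<Prod>i<j. nrm X (xs i))"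
    and carr: "\<forall>xs. (\<forall>i<j. xs i \<in> carr X) \<longrightarrow> A xs \<in> carr L1"
    using assms unfolding mlin_def by blast
  show "\<exists>C. \<forall>xs. (\<forall>i<j. xs i \<in> carr X) \<longrightarrow>
          nrm Ksp (c0 * A xs n0 + c1 * A xs n1) \<le> C * (\<Prod>i<j. nrm X (xs i))"
  proof (intro exI[of _ "(norm c0 + norm c1) * C"] allI impI)
    fix xs assume xs: "\<forall>i<j. xs i \<in> carr X"
    have "nrm Ksp (c0 * A xs n0 + c1 * A xs n1) \<le> norm c0 * norm (A xs n0) + norm c1 * norm (A xs n1)"
      by (simp add: Ksp_def norm_mult[symmetric] norm_triangle_ineq)
    also have "\<dots> \<le> norm c0 * nrm L1 (A xs) + norm c1 * nrm L1 (A xs)"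
      using L1_coord_le carr xs by (intro add_mono mult_left_mono) auto
    also have "\<dots> \<le> norm c0 * (C * (\<Prod>i<j. nrm X (xs i))) + norm c1 * (C * (\<Prod>i<j. nrm X (xs i)))"
      using C xs by (intro add_mono mult_left_mono) auto
    also have "\<dots> = (norm c0 + norm c1) * C * (\<Prod>i<j. nrm X (xs i))"
      by (simp add: algebra_simps)
    finally show "nrm Ksp (c0 * A xs n0 + c1 * A xs n1) \<le> (norm c0 + norm c1) * C * (\<Prod>i<j. nrm X (xs i))" .
  qed
qed

lemma hpoly_Esp_in_carr:
  assumes "hpoly (Esp sc) Y j R"
  shows "R x \<in> carr Y"
  using assms by (auto simp: hpoly_def mlin_def Esp_def)

lemma hpoly_Esp_bounded:
  fixes sc :: "'k::real_normed_field \<Rightarrow> 'e::real_normed_vector \<Rightarrow> 'e"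
  assumes "hpoly (Esp sc) Y j R"
  shows "\<exists>C\<ge>0. \<forall>x. nrm Y (R x) \<le> C * norm x ^ j"
proof -
  obtain A where A: "mlin (Esp sc) Y j A" "\<forall>x. R x = A (\<lambda>_. x)"
    using assms by (auto simp: hpoly_def Esp_def)
  obtain C where C: "\<forall>xs. (\<forall>i<j. xs i \<in> carr (Esp sc)) \<longrightarrow>
                         nrm Y (A xs) \<le> C * (\<Prod>i<j. nrm (Esp sc) (xs i))"
    using A(1) unfolding mlin_def by blast
  have "nrm Y (R x) \<le> max C 0 * norm x ^ j" for x
  proof -
    have "nrm Y (R x) \<le> C * norm x ^ j"
      using C[rule_format, of "\<lambda>_. x"] A(2) by (simp add: Esp_def)
    also have "\<dots> \<le> max C 0 * norm x ^ j" by (intro mult_right_mono) auto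
    finally show ?thesis .
  qed
  then show ?thesis by (intro exI[of _ "max C 0"]) auto
qed

definition two_coord_op :: "('e \<Rightarrow> nat \<Rightarrow> 'k::real_normed_field) \<Rightarrow> ((nat \<Rightarrow> 'k) \<Rightarrow> 'k) \<Rightarrow> 'e \<Rightarrow> 'k" where
  "two_coord_op R q = (\<lambda>x. q (l1_unit 0) * R x 0 + q (l1_unit 1) * R x 1)"

lemma two_coord_op_in_spoly:
  fixes R :: "'e::real_normed_vector \<Rightarrow> nat \<Rightarrow> 'k::real_normed_field"
  assumes "hpoly (Esp sc) L1 j R"
  shows "two_coord_op R q \<in> spoly (Esp sc) j"
proof -
  obtain A where A: "mlin (Esp sc) L1 j A" "\<forall>x. R x = A (\<lambda>_. x)"
    using assms by (auto simp: hpoly_def Esp_def)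
  have "mlin (Esp sc) Ksp j (\<lambda>xs. q (l1_unit 0) * A xs 0 + q (l1_unit 1) * A xs 1)"
    by (rule mlin_L1_coord_comb[OF A(1)])
  then show ?thesis using A(2)
    unfolding spoly_def hpoly_def two_coord_op_def by (auto simp: Esp_def)
qed

lemma blin_poly_two_coord_op:
  fixes R :: "'e::real_normed_vector \<Rightarrow> nat \<Rightarrow> 'k::real_normed_field"
  assumes "hpoly (Esp sc) L1 j R"
  shows "blin_poly L1 k (Esp sc) j (two_coord_op R)"
  unfolding blin_poly_def
proof (intro conjI ballI allI)
  fix q :: "(nat \<Rightarrow> 'k) \<Rightarrow> 'k"
  show "two_coord_op R q \<in> spoly (Esp sc) j" using assms by (rule two_coord_op_in_spoly)
next
  fix q q' :: "(nat \<Rightarrow> 'k) \<Rightarrow> 'k" and a b :: 'k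
  show "two_coord_op R (\<lambda>x. a * q x + b * q' x) = (\<lambda>y. a * two_coord_op R q y + b * two_coord_op R q' y)"
    by (simp add: two_coord_op_def algebra_simps)
next
  obtain C where "C \<ge> 0" and C: "\<forall>x. nrm L1 (R x) \<le> C * norm x ^ j"
    using hpoly_Esp_bounded[OF assms] by blast
  have R_coord: "norm (R x i) \<le> C" if "norm x \<le> 1" for x i
  proof -
    have "norm (R x i) \<le> C * norm x ^ j"
      using L1_coord_le[OF hpoly_Esp_in_carr[OF assms]] C order_trans by blast
    also have "\<dots> \<le> C * 1" using \<open>C \<ge> 0\<close> that by (intro mult_left_mono power_le_one) auto
    finally show ?thesis by simp
  qed
  show "\<exists>D. \<forall>q\<in>spoly L1 k. pnorm (Esp sc) (two_coord_op R q) \<le> D * pnorm L1 q"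
  proof (intro exI[of _ "2 * C"] ballI)
    fix q :: "(nat \<Rightarrow> 'k) \<Rightarrow> 'k" assume "q \<in> spoly L1 k"
    then have q_unit: "norm (q (l1_unit n)) \<le> pnorm L1 q" for n
      by (intro spoly_norm_le_pnorm) (auto simp: L1_nrm_nonneg l1_unit_in_carr nrm_l1_unit)
    have "norm (two_coord_op R q x) \<le> 2 * C * pnorm L1 q" if "norm x \<le> 1" for x
    proof -
      have "norm (two_coord_op R q x)
              \<le> norm (q (l1_unit 0)) * norm (R x 0) + norm (q (l1_unit 1)) * norm (R x 1)"
        unfolding two_coord_op_def by (metis norm_mult norm_triangle_ineq)
      also have "\<dots> \<le> pnorm L1 q * C + pnorm L1 q * C"
        using q_unit R_coord[OF that] order_trans[OF norm_ge_zero q_unit]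
        by (intro add_mono mult_mono) auto
      finally show ?thesis by simp
    qed
    then show "pnorm (Esp sc) (two_coord_op R q) \<le> 2 * C * pnorm L1 q"
      unfolding pnorm_def by (intro cSup_least) (auto simp: Esp_def intro: exI[of _ 0])
  qed
qed

lemma continuous_map_wstar_tens_eval:
  assumes "adm X j u"
  shows "continuous_map (wstar X j) euclidean (tens_eval u)"
proof -
  have "continuous_map (product_topology (\<lambda>_. euclidean) {u. adm X j u}) euclidean (\<lambda>f. f u)"
    using continuous_map_product_projection[of u "{u. adm X j u}" "\<lambda>_. euclidean"] assms by simp
  then have "continuous_map (wstar X j) euclidean
               ((\<lambda>f. f u) \<circ> (\<lambda>q. restrict (\<lambda>u. tens_eval u q) {u. adm X j u}))"
    unfolding wstar_def by (rule continuous_map_pullback)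
  moreover have "(\<lambda>f. f u) \<circ> (\<lambda>q. restrict (\<lambda>u. tens_eval u q) {u. adm X j u}) = tens_eval u"
    using assms by auto
  ultimately show ?thesis by simp
qed

text \<open>A point evaluation is the pairing with the elementary tensor \<open>x \<otimes> \<dots> \<otimes> x\<close>.\<close>

lemma continuous_map_wstar_point_eval:
  fixes X :: "('k::real_normed_field, 'a) nspace"
  assumes "x \<in> carr X"
  shows "continuous_map (wstar X j) euclidean (\<lambda>q. q x)"
proof -
  define u where "u = ((\<lambda>n. if n = 0 then 1 else 0) :: nat \<Rightarrow> 'k, (\<lambda>_::nat. x))"
  have "(\<lambda>n. norm (fst u n) * nrm X (snd u n) ^ j) = (\<lambda>n. if n = 0 then nrm X x ^ j else 0)"
    by (auto simp: u_def)
  then have "adm X j u"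
    using assms sums_summable[OF sums_single] by (auto simp: adm_def u_def)
  moreover have "tens_eval u = (\<lambda>q. q x)"
  proof
    fix q :: "'a \<Rightarrow> 'k"
    have "(\<lambda>n. fst u n * q (snd u n)) = (\<lambda>n. if n = 0 then q x else 0)"
      by (auto simp: u_def)
    then show "tens_eval u q = q x"
      unfolding tens_eval_def using sums_single[of 0 "\<lambda>_. q x"] by (simp add: sums_iff)
  qed
  ultimately show ?thesis
    using continuous_map_wstar_tens_eval[of X j u] by simp
qed

lemma summable_tens_coord:
  fixes R :: "'e::real_normed_vector \<Rightarrow> nat \<Rightarrow> 'k::{real_normed_field,banach}"
  assumes "hpoly (Esp sc) L1 j R" and "adm (Esp sc) j u"
  shows "summable (\<lambda>n. fst u n * R (snd u n) i)"
proof -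
  obtain C where C: "\<forall>x. nrm L1 (R x) \<le> C * norm x ^ j"
    using hpoly_Esp_bounded[OF assms(1)] by blast
  have "summable (\<lambda>n. norm (fst u n) * norm (snd u n) ^ j)"
    using assms(2) by (simp add: adm_def Esp_def)
  then have "summable (\<lambda>n. C * (norm (fst u n) * norm (snd u n) ^ j))"
    by (rule summable_mult)
  moreover have "norm (fst u n * R (snd u n) i) \<le> C * (norm (fst u n) * norm (snd u n) ^ j)" for n
  proof -
    have "norm (R (snd u n) i) \<le> C * norm (snd u n) ^ j"
      using L1_coord_le[OF hpoly_Esp_in_carr[OF assms(1)]] C order_trans by blast
    then have "norm (fst u n) * norm (R (snd u n) i) \<le> norm (fst u n) * (C * norm (snd u n) ^ j)"
      by (simp add: mult_left_mono)
    then show ?thesis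
      by (simp add: norm_mult algebra_simps)
  qed
  ultimately show ?thesis
    by (rule summable_comparison_test'[where N = 0])
qed

lemma tens_eval_two_coord_op:
  fixes R :: "'e::real_normed_vector \<Rightarrow> nat \<Rightarrow> 'k::{real_normed_field,banach}"
  assumes "hpoly (Esp sc) L1 j R" and "adm (Esp sc) j u"
  shows "tens_eval u (two_coord_op R q) =
           q (l1_unit 0) * tens_eval u (\<lambda>x. R x 0) + q (l1_unit 1) * tens_eval u (\<lambda>x. R x 1)"
proof -
  note summable = summable_tens_coord[OF assms]
  have "tens_eval u (two_coord_op R q) =
          (\<Sum>n. q (l1_unit 0) * (fst u n * R (snd u n) 0) + q (l1_unit 1) * (fst u n * R (snd u n) 1))"
    unfolding tens_eval_def two_coord_op_def by (simp add: algebra_simps)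
  also have "\<dots> = q (l1_unit 0) * tens_eval u (\<lambda>x. R x 0) + q (l1_unit 1) * tens_eval u (\<lambda>x. R x 1)"
    unfolding tens_eval_def
    by (simp add: suminf_add[symmetric] suminf_mult summable_mult summable)
  finally show ?thesis .
qed

lemma continuous_map_wstar_two_coord_op:
  fixes R :: "'e::real_normed_vector \<Rightarrow> nat \<Rightarrow> 'k::{real_normed_field,banach}"
  assumes "hpoly (Esp sc) L1 j R"
  shows "continuous_map (wstar L1 k) (wstar (Esp sc) j) (two_coord_op R)"
proof -
  let ?U = "{u. adm (Esp sc) j u}"
  have "continuous_map (wstar L1 k) euclidean (\<lambda>q. tens_eval u (two_coord_op R q))"
    if "u \<in> ?U" for u
  proof -
    have unit_eval: "continuous_map (wstar L1 k) euclidean (\<lambda>q. q (l1_unit n) * s)"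
      for n and s :: 'k
      using continuous_map_wstar_point_eval[OF l1_unit_in_carr, of k n]
      unfolding continuous_map_atin by (auto intro: tendsto_mult_right)
    show ?thesis
      using that unit_eval
      by (simp add: tens_eval_two_coord_op[OF assms] mult.commute[of "_ (l1_unit _)"] continuous_map_add)
  qed
  then have "continuous_map (wstar L1 k) (product_topology (\<lambda>_. euclidean) ?U)
               ((\<lambda>q. restrict (\<lambda>u. tens_eval u q) ?U) \<circ> two_coord_op R)"
    by (auto simp: continuous_map_componentwise)
  moreover have "topspace (wstar L1 k) \<subseteq> two_coord_op R -` spoly (Esp sc) j"
    using two_coord_op_in_spoly[OF assms] by auto
  ultimately show ?thesis
    unfolding wstar_def[of "Esp sc"] by (rule continuous_map_pullback')
qed

theorem mainTheorem11:
  fixes sc :: "'k::{real_normed_field, banach} \<Rightarrow> 'e::banach \<Rightarrow> 'e"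
    and m k :: nat
  assumes "kvs sc"
    and "k > 1"
    and "\<exists>R. hpoly (Esp sc) L1 (m * k) R \<and> R ` UNIV = carr L1"
  shows "\<exists>T. blin_poly L1 k (Esp sc) (m * k) T \<and>
             continuous_map (wstar L1 k) (wstar (Esp sc) (m * k)) T \<and>
             (\<forall>P. hpoly (Esp sc) L1 m P \<longrightarrow> (\<exists>q\<in>spoly L1 k. T q \<noteq> Delta1 P q))"
proof -
  obtain R :: "'e \<Rightarrow> nat \<Rightarrow> 'k" where R: "hpoly (Esp sc) L1 (m * k) R" "R ` UNIV = carr L1"
    using assms(3) by blast
  have norm_eq: "(\<lambda>n. norm (if n \<in> {0, 1} then 1 else 0 :: 'k)) = (\<lambda>n. if n \<in> {0, 1} then 1 else 0)"
    by auto
  have "(\<lambda>n. if n \<in> {0, 1} then 1 else 0 :: 'k) \<in> carr L1"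
    by (simp only: L1_def nspace.select_convs mem_Collect_eq norm_eq summable_If_finite_set finite.intros)
  then obtain x where x: "R x = (\<lambda>n. if n \<in> {0, 1} then 1 else 0)"
    using R(2) by (metis imageE)
  have "\<exists>q\<in>spoly L1 k. two_coord_op R q \<noteq> Delta1 P q" if P: "hpoly (Esp sc) L1 m P" for P
  proof -
    obtain q where "q \<in> spoly L1 k" "q (P x) \<noteq> q (l1_unit 0) + q (l1_unit 1)"
      using point_eval_ne_sum_of_unit_evals[OF \<open>k > 1\<close> hpoly_Esp_in_carr[OF P]] by blast
    moreover have "two_coord_op R q x = q (l1_unit 0) + q (l1_unit 1)"
      by (simp add: two_coord_op_def x)
    ultimately show ?thesis by (metis Delta1_def comp_apply)
  qed
  then show ?thesis
    using blin_poly_two_coord_op[OF R(1)] continuous_map_wstar_two_coord_op[OF R(1)] by blast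
qed

end
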